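(* Let $\Gamma=A\ast B$ be a free product of two non-trivial groups $A,B$, and let $E$ be a Banach $\Gamma$-module (regarded also as an $A$-module and a $B$-module via the inclusions $A,B\hookrightarrow\Gamma$). For $f_A\in\mathrm{Q}\mathcal{Z}_{\mathrm{alt}}(A,E)$ and $f_B\in\mathrm{Q}\mathcal{Z}_{\mathrm{alt}}(B,E)$, the split map $f=f_A\ast f_B:\Gamma\to E$ is an alternating quasicocycle on $\Gamma$ with $\mathrm{def}\, f=\max\{\mathrm{def}\, f_A,\mathrm{def}\, f_B\}$. Moreover, the induced linear map \[ \mathrm{Q}\mathcal{Z}_{\mathrm{alt}}(A,E)\times\mathrm{Q}\mathcal{Z}_{\mathrm{alt}}(B,E)\to\mathrm{Q}\mathcal{Z}_{\mathrm{alt}}(\Gamma,E),\quad (f_A,f_B)\mapsto f_A\ast f_B \] extends the natural isomorphism $\mathcal{Z}^1(A,E)\times\mathcal{Z}^1(B,E)\to\mathcal{Z}^1(\Gamma,E)$.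
   Context: A Banach $\Gamma$-module is a Banach space $E$ with a linear isometric action of $\Gamma$, written $g.v$. A map $f:\Gamma\to E$ is a quasicocycle if $\mathrm{def}\, f:=\sup_{g,h\in\Gamma}\|f(gh)-f(g)-g.f(h)\|_E<\infty$; $\mathrm{Q}\mathcal{Z}(\Gamma,E)$ denotes the space of quasicocycles, and $\mathrm{Q}\mathcal{Z}_{\mathrm{alt}}(\Gamma,E)$ the subspace of alternating ones, i.e. those with $f(g)+g.f(g^{-1})=0$ for all $g$. $\mathcal{Z}^1(\Gamma,E)$ denotes the space of cocycles, i.e. maps with $f(gh)=f(g)+g.f(h)$. Every $1\neq g\in\Gamma=A\ast B$ has a unique normal form $g=a_1b_1a_2b_2\cdots a_nb_n$ with $a_i\in A$, $b_i\in B$, all non-trivial except possibly $a_1$ or $b_n$. The split map is defined by $(f_A\ast f_B)(1)=0$ and \[ (f_A\ast f_B)(a_1b_1\cdots a_nb_n)=f_A(a_1)+a_1.f_B(b_1)+a_1b_1.f_A(a_2)+\dots+a_1b_1a_2\cdots b_{n-1}a_n.f_B(b_n). \] *)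

theory Defs
  imports Complex_Main "HOL-Algebra.Group"
begin

definition banach_module :: "('g,'m) monoid_scheme \<Rightarrow> ('g \<Rightarrow> 'e::banach \<Rightarrow> 'e) \<Rightarrow> bool" where
  "banach_module G act \<longleftrightarrow>
     (\<forall>g\<in>carrier G. linear (act g) \<and> (\<forall>v. norm (act g v) = norm v)) \<and>
     (\<forall>v. act \<one>\<^bsub>G\<^esub> v = v) \<and>
     (\<forall>g\<in>carrier G. \<forall>h\<in>carrier G. \<forall>v. act (g \<otimes>\<^bsub>G\<^esub> h) v = act g (act h v))"

definition quasicocycle :: "('g,'m) monoid_scheme \<Rightarrow> 'g set \<Rightarrow> ('g \<Rightarrow> 'e::real_normed_vector \<Rightarrow> 'e) \<Rightarrow> ('g \<Rightarrow> 'e) \<Rightarrow> bool" where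
  "quasicocycle G H act f \<longleftrightarrow>
     bdd_above {norm (f (g \<otimes>\<^bsub>G\<^esub> h) - f g - act g (f h)) | g h. g \<in> H \<and> h \<in> H}"

definition defect :: "('g,'m) monoid_scheme \<Rightarrow> 'g set \<Rightarrow> ('g \<Rightarrow> 'e::real_normed_vector \<Rightarrow> 'e) \<Rightarrow> ('g \<Rightarrow> 'e) \<Rightarrow> real" where
  "defect G H act f = Sup {norm (f (g \<otimes>\<^bsub>G\<^esub> h) - f g - act g (f h)) | g h. g \<in> H \<and> h \<in> H}"

definition alternating :: "('g,'m) monoid_scheme \<Rightarrow> 'g set \<Rightarrow> ('g \<Rightarrow> 'e::real_normed_vector \<Rightarrow> 'e) \<Rightarrow> ('g \<Rightarrow> 'e) \<Rightarrow> bool" where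
  "alternating G H act f \<longleftrightarrow> (\<forall>g\<in>H. f g + act g (f (inv\<^bsub>G\<^esub> g)) = 0)"

definition alt_quasicocycle :: "('g,'m) monoid_scheme \<Rightarrow> 'g set \<Rightarrow> ('g \<Rightarrow> 'e::real_normed_vector \<Rightarrow> 'e) \<Rightarrow> ('g \<Rightarrow> 'e) \<Rightarrow> bool" where
  "alt_quasicocycle G H act f \<longleftrightarrow> quasicocycle G H act f \<and> alternating G H act f"

definition cocycle :: "('g,'m) monoid_scheme \<Rightarrow> 'g set \<Rightarrow> ('g \<Rightarrow> 'e::real_normed_vector \<Rightarrow> 'e) \<Rightarrow> ('g \<Rightarrow> 'e) \<Rightarrow> bool" where
  "cocycle G H act f \<longleftrightarrow> (\<forall>g\<in>H. \<forall>h\<in>H. f (g \<otimes>\<^bsub>G\<^esub> h) = f g + act g (f h))"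

text \<open>Normal forms: a list [(a1,b1),...,(an,bn)], n \<ge> 1, with ai in A, bi in B, all
  non-trivial except possibly a1 and bn, whose product a1 b1 ... an bn is g.\<close>
definition pairs_prod :: "('g,'m) monoid_scheme \<Rightarrow> ('g \<times> 'g) list \<Rightarrow> 'g" where
  "pairs_prod G ps = foldr (\<lambda>(a,b) x. a \<otimes>\<^bsub>G\<^esub> b \<otimes>\<^bsub>G\<^esub> x) ps \<one>\<^bsub>G\<^esub>"

definition is_normal_form :: "('g,'m) monoid_scheme \<Rightarrow> 'g set \<Rightarrow> 'g set \<Rightarrow> ('g \<times> 'g) list \<Rightarrow> 'g \<Rightarrow> bool" where
  "is_normal_form G A B ps g \<longleftrightarrow>
     ps \<noteq> [] \<and>
     (\<forall>i<length ps. fst (ps ! i) \<in> A \<and> snd (ps ! i) \<in> B) \<and>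
     (\<forall>i<length ps. i \<noteq> 0 \<longrightarrow> fst (ps ! i) \<noteq> \<one>\<^bsub>G\<^esub>) \<and>
     (\<forall>i<length ps. i \<noteq> length ps - 1 \<longrightarrow> snd (ps ! i) \<noteq> \<one>\<^bsub>G\<^esub>) \<and>
     pairs_prod G ps = g"

definition is_free_product :: "('g,'m) monoid_scheme \<Rightarrow> 'g set \<Rightarrow> 'g set \<Rightarrow> bool" where
  "is_free_product G A B \<longleftrightarrow> group G \<and> subgroup A G \<and> subgroup B G \<and>
     (\<forall>g\<in>carrier G. g \<noteq> \<one>\<^bsub>G\<^esub> \<longrightarrow> (\<exists>!ps. is_normal_form G A B ps g))"

fun split_aux :: "('g,'m) monoid_scheme \<Rightarrow> ('g \<Rightarrow> 'e \<Rightarrow> 'e) \<Rightarrow> ('g \<Rightarrow> 'e::real_normed_vector) \<Rightarrow> ('g \<Rightarrow> 'e)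
                  \<Rightarrow> 'g \<Rightarrow> ('g \<times> 'g) list \<Rightarrow> 'e" where
  "split_aux G act fA fB pre [] = 0"
| "split_aux G act fA fB pre ((a,b) # ps) =
     act pre (fA a) + act (pre \<otimes>\<^bsub>G\<^esub> a) (fB b) + split_aux G act fA fB (pre \<otimes>\<^bsub>G\<^esub> a \<otimes>\<^bsub>G\<^esub> b) ps"

definition split_map :: "('g,'m) monoid_scheme \<Rightarrow> 'g set \<Rightarrow> 'g set \<Rightarrow> ('g \<Rightarrow> 'e \<Rightarrow> 'e)
     \<Rightarrow> ('g \<Rightarrow> 'e::real_normed_vector) \<Rightarrow> ('g \<Rightarrow> 'e) \<Rightarrow> 'g \<Rightarrow> 'e" where
  "split_map G A B act fA fB g =
     (if g = \<one>\<^bsub>G\<^esub> then 0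
      else split_aux G act fA fB \<one>\<^bsub>G\<^esub> (THE ps. is_normal_form G A B ps g))"

end

theory Submission
  imports Defs
begin

text \<open>Every element of \<open>A * B\<close> is the product of a reduced word in the letters \<open>(A \<union> B) - {1}\<close>
  (consecutive letters lie in different factors), and pairing up its letters gives the normal form.
  Along a reduced word \<open>x\<^sub>1\<cdots>x\<^sub>n\<close> the split map is therefore
  \<open>F(x\<^sub>1\<cdots>x\<^sub>n) = \<Sum>\<^sub>i (x\<^sub>1\<cdots>x\<^sub>i\<^sub>-\<^sub>1).f(x\<^sub>i)\<close>, where \<open>f\<close> is \<open>f\<^sub>A\<close> on \<open>A\<close> and \<open>f\<^sub>B\<close> on \<open>B\<close>.
  Hence \<open>F\<close> extends \<open>f\<^sub>A\<close> and \<open>f\<^sub>B\<close>, and \<open>F(uv) = F(u) + u.F(v)\<close> whenever the reduced words of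
  \<open>u\<close> and \<open>v\<close> concatenate to a reduced word.

  The defect \<open>dF(g,h) = F(gh) - F(g) - g.F(h)\<close> is bounded by induction on the reduced word of
  \<open>h\<close>: splitting off its first letter \<open>x\<close> gives \<open>dF(g,xh') = dF(gx,h') + dF(g,x)\<close>. If \<open>x\<close>
  neither merges with nor cancels the last letter \<open>y\<close> of \<open>g\<close>, then \<open>dF(g,x) = 0\<close>; if it
  cancels it, \<open>dF(g,x) = 0\<close> because \<open>f\<^sub>A\<close> and \<open>f\<^sub>B\<close> are alternating. Otherwise \<open>yx\<close> is a single
  letter, so \<open>dF(gx,h') = 0\<close>, while \<open>dF(g,x)\<close> is a translate of the defect of \<open>f\<^sub>A\<close> or \<open>f\<^sub>B\<close>
  at \<open>(y,x)\<close>. So \<open>def F \<le> max (def f\<^sub>A) (def f\<^sub>B)\<close>, with equality since \<open>F\<close> extends both; for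
  cocycles the bound is \<open>0\<close>, and a cocycle is determined by its values on the letters.\<close>

lemma defect_upper:
  assumes "quasicocycle G H act f" and "g \<in> H" and "h \<in> H"
  shows "norm (f (g \<otimes>\<^bsub>G\<^esub> h) - f g - act g (f h)) \<le> defect G H act f"
  using assms unfolding quasicocycle_def defect_def by (intro cSup_upper) auto

lemma quasicocycle_defect_le:
  assumes "H \<noteq> {}"
    and bound: "\<And>g h. g \<in> H \<Longrightarrow> h \<in> H \<Longrightarrow> norm (f (g \<otimes>\<^bsub>G\<^esub> h) - f g - act g (f h)) \<le> M"
  shows "quasicocycle G H act f" and "defect G H act f \<le> M"
proof -
  let ?S = "{norm (f (g \<otimes>\<^bsub>G\<^esub> h) - f g - act g (f h)) | g h. g \<in> H \<and> h \<in> H}"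
  have "x \<le> M" if "x \<in> ?S" for x using that bound by blast
  then show "quasicocycle G H act f" unfolding quasicocycle_def by (rule bdd_aboveI)
  show "defect G H act f \<le> M"
    unfolding defect_def using \<open>H \<noteq> {}\<close> \<open>\<And>x. x \<in> ?S \<Longrightarrow> x \<le> M\<close> by (intro cSup_least) auto
qed

locale group_module = group G for G :: "('g,'m) monoid_scheme" (structure) +
  fixes act :: "'g \<Rightarrow> 'e::banach \<Rightarrow> 'e"
  assumes module: "banach_module G act"
begin

lemma act_linear: "g \<in> carrier G \<Longrightarrow> linear (act g)"
  and act_norm: "g \<in> carrier G \<Longrightarrow> norm (act g v) = norm v"
  and act_one [simp]: "act \<one> v = v"
  and act_mult: "g \<in> carrier G \<Longrightarrow> h \<in> carrier G \<Longrightarrow> act (g \<otimes> h) v = act g (act h v)"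
  using module unfolding banach_module_def by auto

lemma act_add: "g \<in> carrier G \<Longrightarrow> act g (v + w) = act g v + act g w"
  and act_diff: "g \<in> carrier G \<Longrightarrow> act g (v - w) = act g v - act g w"
  and act_scaleR: "g \<in> carrier G \<Longrightarrow> act g (c *\<^sub>R v) = c *\<^sub>R act g v"
  and act_zero: "g \<in> carrier G \<Longrightarrow> act g 0 = 0"
  by (simp_all add: act_linear linear_add linear_diff linear_scale linear_0)

lemma act_inv_cancel: "g \<in> carrier G \<Longrightarrow> act g (act (inv g) v) = v"
  by (metis act_mult act_one inv_closed r_inv)

definition cocycle_defect :: "('g \<Rightarrow> 'e) \<Rightarrow> 'g \<Rightarrow> 'g \<Rightarrow> 'e" where
  "cocycle_defect f g h = f (g \<otimes> h) - f g - act g (f h)"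

lemma cocycle_defect_mult_right:
  assumes "g \<in> carrier G" and "x \<in> carrier G" and "h \<in> carrier G"
  shows "cocycle_defect f g (x \<otimes> h)
    = cocycle_defect f (g \<otimes> x) h + cocycle_defect f g x - act g (cocycle_defect f x h)"
  using assms by (simp add: cocycle_defect_def act_diff act_add act_mult m_assoc algebra_simps)

lemma alternating_one_eq_zero:
  assumes "alternating G H act f" and "\<one> \<in> H"
  shows "f \<one> = 0"
proof -
  have "f \<one> + f \<one> = 0" using assms by (auto simp: alternating_def)
  then have "2 *\<^sub>R f \<one> = 0" by (simp add: scaleR_2)
  then show ?thesis by simp
qed

lemma cocycle_one_eq_zero:
  assumes "cocycle G H act f" and "\<one> \<in> H"
  shows "f \<one> = 0"
proof -
  have "f (\<one> \<otimes> \<one>) = f \<one> + act \<one> (f \<one>)" using assms unfolding cocycle_def by blast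
  then show ?thesis by simp
qed

lemma cocycle_imp_alternating:
  assumes "subgroup H G" and "cocycle G H act f"
  shows "alternating G H act f"
  unfolding alternating_def
proof
  fix g assume "g \<in> H"
  then have "f (g \<otimes> inv g) = f g + act g (f (inv g))"
    using assms by (auto simp: cocycle_def subgroup.m_inv_closed)
  moreover have "g \<otimes> inv g = \<one>" using \<open>g \<in> H\<close> assms(1) subgroup.mem_carrier by force
  ultimately show "f g + act g (f (inv g)) = 0"
    using cocycle_one_eq_zero[OF assms(2) subgroup.one_closed[OF assms(1)]] by simp
qed

end

locale free_product = group G for G :: "('g,'m) monoid_scheme" (structure) +
  fixes A B :: "'g set"
  assumes free: "is_free_product G A B"
begin

lemma subgroup_A: "subgroup A G"
  and subgroup_B: "subgroup B G"
  and normal_form_unique: "g \<in> carrier G \<Longrightarrow> g \<noteq> \<one> \<Longrightarrow> \<exists>!ps. is_normal_form G A B ps g"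
  using free unfolding is_free_product_def by auto

sublocale A: subgroup A G by (rule subgroup_A)
sublocale B: subgroup B G by (rule subgroup_B)

lemma inv_in_A_iff: "x \<in> carrier G \<Longrightarrow> inv x \<in> A \<longleftrightarrow> x \<in> A"
  by (metis A.m_inv_closed inv_inv)

lemma inv_in_B_iff: "x \<in> carrier G \<Longrightarrow> inv x \<in> B \<longleftrightarrow> x \<in> B"
  by (metis B.m_inv_closed inv_inv)

lemma is_normal_form_A: "a \<in> A \<Longrightarrow> is_normal_form G A B [(a, \<one>)] a"
  unfolding is_normal_form_def pairs_prod_def by auto

lemma is_normal_form_B: "b \<in> B \<Longrightarrow> is_normal_form G A B [(\<one>, b)] b"
  unfolding is_normal_form_def pairs_prod_def by auto

lemma normal_form_eq:
  assumes "g \<in> carrier G" and "g \<noteq> \<one>"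
    and "is_normal_form G A B ps g" and "is_normal_form G A B qs g"
  shows "ps = qs"
  using normal_form_unique[OF assms(1,2)] assms(3,4) by (elim ex1E) blast

lemma A_Int_B: "A \<inter> B = {\<one>}"
proof -
  have "x = \<one>" if "x \<in> A" and "x \<in> B" for x
  proof (rule ccontr)
    assume "x \<noteq> \<one>"
    have "is_normal_form G A B [(x, \<one>)] x" using \<open>x \<in> A\<close> by (rule is_normal_form_A)
    moreover have "is_normal_form G A B [(\<one>, x)] x" using \<open>x \<in> B\<close> by (rule is_normal_form_B)
    ultimately have "[(x, \<one>)] = [(\<one>, x)]"
      by (rule normal_form_eq[OF A.mem_carrier[OF \<open>x \<in> A\<close>] \<open>x \<noteq> \<one>\<close>])
    with \<open>x \<noteq> \<one>\<close> show False by simp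
  qed
  then show ?thesis using A.one_closed B.one_closed by blast
qed

definition letters :: "'g set" where
  "letters = (A \<union> B) - {\<one>}"

definition same_factor :: "'g \<Rightarrow> 'g \<Rightarrow> bool" where
  "same_factor x y \<longleftrightarrow> x \<in> A \<and> y \<in> A \<or> x \<in> B \<and> y \<in> B"

definition reduced :: "'g list \<Rightarrow> bool" where
  "reduced xs \<longleftrightarrow> set xs \<subseteq> letters \<and> successively (\<lambda>x y. \<not> same_factor x y) xs"

definition word_prod :: "'g list \<Rightarrow> 'g" where
  "word_prod xs = foldr (\<otimes>) xs \<one>"

lemma letters_carrier: "x \<in> letters \<Longrightarrow> x \<in> carrier G"
  unfolding letters_def by auto

lemma letter_in_B_iff: "x \<in> letters \<Longrightarrow> x \<in> B \<longleftrightarrow> x \<notin> A"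
proof -
  assume "x \<in> letters"
  then have "x \<noteq> \<one>" "x \<in> A \<or> x \<in> B" unfolding letters_def by auto
  moreover have "x \<notin> A \<inter> B" using A_Int_B \<open>x \<noteq> \<one>\<close> by simp
  ultimately show ?thesis by blast
qed

lemma same_factor_iff: "x \<in> letters \<Longrightarrow> y \<in> letters \<Longrightarrow> same_factor x y \<longleftrightarrow> (x \<in> A \<longleftrightarrow> y \<in> A)"
  unfolding same_factor_def using letter_in_B_iff[of x] letter_in_B_iff[of y] by auto

lemma inv_letter:
  assumes "x \<in> letters"
  shows "inv x \<in> letters"
proof -
  have x: "x \<in> carrier G" "x \<noteq> \<one>" "x \<in> A \<or> x \<in> B" using assms unfolding letters_def by auto
  then have "inv x \<in> A \<or> inv x \<in> B" using inv_in_A_iff inv_in_B_iff by blast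
  moreover have "inv x \<noteq> \<one>" using x by simp
  ultimately show ?thesis unfolding letters_def by blast
qed

lemma word_prod_Nil [simp]: "word_prod [] = \<one>"
  and word_prod_Cons [simp]: "word_prod (x # xs) = x \<otimes> word_prod xs"
  by (simp_all add: word_prod_def)

lemma word_prod_closed: "set xs \<subseteq> carrier G \<Longrightarrow> word_prod xs \<in> carrier G"
  by (induction xs) auto

lemma word_prod_append:
  "set xs \<subseteq> carrier G \<Longrightarrow> set ys \<subseteq> carrier G \<Longrightarrow> word_prod (xs @ ys) = word_prod xs \<otimes> word_prod ys"
  by (induction xs) (auto simp: word_prod_closed m_assoc)

lemma reduced_Nil [simp]: "reduced []"
  and reduced_single [simp]: "reduced [x] \<longleftrightarrow> x \<in> letters"
  by (simp_all add: reduced_def)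

lemma reduced_Cons: "reduced (x # xs) \<longleftrightarrow> x \<in> letters \<and> reduced xs \<and> (xs = [] \<or> \<not> same_factor x (hd xs))"
  by (auto simp: reduced_def successively_Cons)

lemma reduced_append:
  "reduced (xs @ ys) \<longleftrightarrow> reduced xs \<and> reduced ys \<and> (xs = [] \<or> ys = [] \<or> \<not> same_factor (last xs) (hd ys))"
  by (auto simp: reduced_def successively_append_iff)

lemma reduced_carrier: "reduced xs \<Longrightarrow> set xs \<subseteq> carrier G"
  unfolding reduced_def using letters_carrier by blast

lemma reduced_word_prod_closed: "reduced xs \<Longrightarrow> word_prod xs \<in> carrier G"
  by (simp add: reduced_carrier word_prod_closed)

lemma merge_letters:
  assumes "x \<in> letters" and "y \<in> letters" and "same_factor x y" and "x \<otimes> y \<noteq> \<one>"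
  shows "x \<otimes> y \<in> letters" and "x \<otimes> y \<in> A \<longleftrightarrow> x \<in> A" and "x \<otimes> y \<in> A \<longleftrightarrow> y \<in> A"
proof -
  have "x \<otimes> y \<in> A \<and> x \<in> A \<and> y \<in> A \<or> x \<otimes> y \<in> B \<and> x \<in> B \<and> y \<in> B"
    using assms(3) unfolding same_factor_def by blast
  then show "x \<otimes> y \<in> letters" using assms(4) unfolding letters_def by blast
  then show "x \<otimes> y \<in> A \<longleftrightarrow> x \<in> A" and "x \<otimes> y \<in> A \<longleftrightarrow> y \<in> A"
    using \<open>x \<otimes> y \<in> A \<and> x \<in> A \<and> y \<in> A \<or> _\<close> letter_in_B_iff assms(1,2) by blast+
qed

lemma reduced_Cons_letter:
  assumes x: "x \<in> A \<union> B" and ys: "reduced ys"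
  shows "\<exists>zs. reduced zs \<and> word_prod zs = x \<otimes> word_prod ys"
proof (cases "x = \<one>")
  case True
  then show ?thesis using ys reduced_word_prod_closed[OF ys] by (intro exI[of _ ys]) simp
next
  case False
  then have x: "x \<in> letters" using x letters_def by auto
  show ?thesis
  proof (cases "ys = [] \<or> \<not> same_factor x (hd ys)")
    case True
    then show ?thesis using ys x by (intro exI[of _ "x # ys"]) (auto simp: reduced_Cons)
  next
    case False
    then obtain y ys' where ys_eq: "ys = y # ys'" and xy: "same_factor x y" by (cases ys) auto
    have y: "y \<in> letters" and ys': "reduced ys'" "ys' = [] \<or> \<not> same_factor y (hd ys')"
      using ys ys_eq by (auto simp: reduced_Cons)
    have prod_eq: "x \<otimes> word_prod ys = (x \<otimes> y) \<otimes> word_prod ys'"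
      using ys_eq letters_carrier[OF x] letters_carrier[OF y] reduced_word_prod_closed[OF ys'(1)]
      by (simp add: m_assoc)
    show ?thesis
    proof (cases "x \<otimes> y = \<one>")
      case True
      then show ?thesis using prod_eq ys' reduced_word_prod_closed by (intro exI[of _ ys']) auto
    next
      case False
      note xy_merge = merge_letters[OF x y xy False]
      have "ys' = [] \<or> \<not> same_factor (x \<otimes> y) (hd ys')"
        using ys' xy_merge y by (cases ys') (auto simp: reduced_Cons same_factor_iff)
      then show ?thesis
        using prod_eq ys' xy_merge by (intro exI[of _ "(x \<otimes> y) # ys'"]) (auto simp: reduced_Cons)
    qed
  qed
qed

lemma reduce_word: "set xs \<subseteq> A \<union> B \<Longrightarrow> \<exists>ys. reduced ys \<and> word_prod ys = word_prod xs"
proof (induction xs)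
  case (Cons x xs)
  then obtain ys where "reduced ys" and "word_prod ys = word_prod xs" by auto
  then show ?case using reduced_Cons_letter Cons.prems by fastforce
qed (intro exI[of _ "[]"], simp)

lemma normal_form_letters:
  assumes "is_normal_form G A B ps g" and "p \<in> set ps"
  shows "fst p \<in> A" and "snd p \<in> B"
  using assms unfolding is_normal_form_def in_set_conv_nth by auto

lemma word_prod_concat_pairs:
  "word_prod (concat (map (\<lambda>(a, b). [a, b]) ps)) = pairs_prod G ps"
  if "\<forall>p\<in>set ps. fst p \<in> A \<and> snd p \<in> B"
  using that
proof (induction ps)
  case Nil
  then show ?case by (simp add: pairs_prod_def)
next
  case (Cons p ps)
  obtain a b where p: "p = (a, b)" by force
  have IH: "word_prod (concat (map (\<lambda>(a, b). [a, b]) ps)) = pairs_prod G ps"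
    using Cons by simp
  have "set (concat (map (\<lambda>(a, b). [a, b]) ps)) \<subseteq> carrier G" using Cons.prems by force
  then have "pairs_prod G ps \<in> carrier G" using IH word_prod_closed by metis
  then show ?case using IH p Cons.prems by (simp add: pairs_prod_def m_assoc)
qed

lemma reduced_word_exists: "g \<in> carrier G \<Longrightarrow> \<exists>gs. reduced gs \<and> word_prod gs = g"
proof (cases "g = \<one>")
  case True
  then show ?thesis by (intro exI[of _ "[]"]) simp
next
  assume "g \<in> carrier G" and "g \<noteq> \<one>"
  then obtain ps where ps: "is_normal_form G A B ps g" using normal_form_unique by blast
  let ?xs = "concat (map (\<lambda>(a, b). [a, b]) ps)"
  have "\<forall>p\<in>set ps. fst p \<in> A \<and> snd p \<in> B" using normal_form_letters[OF ps] by blast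
  then have "set ?xs \<subseteq> A \<union> B" and "word_prod ?xs = g"
    using word_prod_concat_pairs ps unfolding is_normal_form_def by auto
  then show ?thesis using reduce_word by metis
qed

fun pair_up :: "'g list \<Rightarrow> ('g \<times> 'g) list" where
  "pair_up [] = []"
| "pair_up [a] = [(a, \<one>)]"
| "pair_up (a # b # xs) = (a, b) # pair_up xs"

definition normal_form_of :: "'g list \<Rightarrow> ('g \<times> 'g) list" where
  "normal_form_of xs = (case xs of [] \<Rightarrow> [] | x # xs' \<Rightarrow> if x \<in> A then pair_up xs else (\<one>, x) # pair_up xs')"

lemma reduced_Cons_hd_A:
  assumes "reduced (x # xs)" and "x \<notin> A"
  shows "xs = [] \<or> hd xs \<in> A"
  using assms letter_in_B_iff by (cases xs) (auto simp: reduced_Cons same_factor_def)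

lemma pair_up_normal:
  assumes "reduced xs" and "xs = [] \<or> hd xs \<in> A"
  shows "(\<forall>p\<in>set (pair_up xs). fst p \<in> A - {\<one>} \<and> snd p \<in> B) \<and>
    (\<forall>p\<in>set (butlast (pair_up xs)). snd p \<noteq> \<one>) \<and>
    pairs_prod G (pair_up xs) = word_prod xs \<and> (pair_up xs = [] \<longleftrightarrow> xs = [])"
  using assms
proof (induction xs rule: pair_up.induct)
  case (2 a)
  then show ?case using letters_def letters_carrier by (auto simp: pairs_prod_def)
next
  case (3 a b xs)
  have a: "a \<in> A - {\<one>}" using "3.prems" by (auto simp: reduced_Cons letters_def)
  have b: "b \<in> B - {\<one>}" "b \<notin> A"
    using "3.prems" a letter_in_B_iff by (auto simp: reduced_Cons letters_def same_factor_def)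
  have xs: "reduced xs" "xs = [] \<or> hd xs \<in> A"
    using "3.prems"(1) reduced_Cons_hd_A[of b xs] b(2) by (auto simp: reduced_Cons)
  have "pairs_prod G (pair_up (a # b # xs)) = word_prod (a # b # xs)"
    using "3.IH"[OF xs] a b reduced_word_prod_closed[OF xs(1)] by (simp add: pairs_prod_def m_assoc)
  then show ?case using "3.IH"[OF xs] a b by auto
qed (simp_all add: pairs_prod_def)

lemma is_normal_formI:
  assumes "ps \<noteq> []" and "\<forall>p\<in>set ps. fst p \<in> A \<and> snd p \<in> B"
    and "\<forall>p\<in>set (tl ps). fst p \<noteq> \<one>" and "\<forall>p\<in>set (butlast ps). snd p \<noteq> \<one>"
    and "pairs_prod G ps = g"
  shows "is_normal_form G A B ps g"
  unfolding is_normal_form_def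
proof (intro conjI allI impI)
  fix i assume i: "i < length ps"
  then show "fst (ps ! i) \<in> A" and "snd (ps ! i) \<in> B" using assms(2) nth_mem by blast+
  show "fst (ps ! i) \<noteq> \<one>" if "i \<noteq> 0"
    using assms(3) i that nth_mem[of "i - 1" "tl ps"] by (simp add: nth_tl)
  show "snd (ps ! i) \<noteq> \<one>" if "i \<noteq> length ps - 1"
    using assms(4) i that nth_mem[of i "butlast ps"] by (simp add: nth_butlast)
qed (use assms in auto)

lemma is_normal_form_normal_form_of:
  assumes "reduced xs" and "xs \<noteq> []"
  shows "is_normal_form G A B (normal_form_of xs) (word_prod xs)"
proof -
  obtain x xs' where xs: "xs = x # xs'" using assms(2) by (cases xs) auto
  show ?thesis
  proof (cases "x \<in> A")
    case True
    then show ?thesis using pair_up_normal[OF assms(1)] xs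
      by (intro is_normal_formI) (auto simp: normal_form_of_def list.set_sel(2))
  next
    case False
    have x: "x \<in> B - {\<one>}" using assms(1) xs False letter_in_B_iff by (auto simp: reduced_Cons letters_def)
    have xs': "reduced xs'" "xs' = [] \<or> hd xs' \<in> A"
      using assms(1) xs reduced_Cons_hd_A False by (auto simp: reduced_Cons)
    note P = pair_up_normal[OF xs']
    show ?thesis using P xs False x reduced_word_prod_closed[OF xs'(1)]
      by (intro is_normal_formI) (auto simp: normal_form_of_def pairs_prod_def butlast.simps(2))
  qed
qed

lemma fst_hd_normal_form_of: "fst (hd (normal_form_of (x # xs))) = (if x \<in> A then x else \<one>)"
  by (cases xs) (auto simp: normal_form_of_def)

lemma word_prod_neq_one:
  assumes "reduced xs" and "xs \<noteq> []"
  shows "word_prod xs \<noteq> \<one>"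
proof
  assume prod_one: "word_prod xs = \<one>"
  obtain x ys where xs: "xs = x # ys" using assms(2) by (cases xs) auto
  have x: "x \<in> letters" "x \<in> carrier G" and ys: "reduced ys"
    and alt: "ys = [] \<or> \<not> same_factor x (hd ys)"
    using assms(1) xs letters_carrier by (auto simp: reduced_Cons)
  have inv_x: "inv x \<in> letters" "inv x \<noteq> \<one>" using inv_letter[OF x(1)] unfolding letters_def by auto
  have ys_prod: "word_prod ys = inv x"
    using prod_one xs x(2) reduced_word_prod_closed[OF ys] by (metis inv_equality inv_comm word_prod_Cons)
  then obtain y ys' where ys_eq: "ys = y # ys'" using inv_x(2) by (cases ys) auto
  have y: "y \<in> letters" "\<not> same_factor x y" using ys ys_eq alt by (auto simp: reduced_Cons)
  txt \<open>\<open>ys\<close> and \<open>[inv x]\<close> have the same product, hence the same normal form, but the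
    first entries of their normal forms differ.\<close>
  have "is_normal_form G A B (normal_form_of ys) (inv x)"
    using is_normal_form_normal_form_of[OF ys] ys_eq ys_prod by simp
  moreover have "is_normal_form G A B (normal_form_of [inv x]) (inv x)"
    using is_normal_form_normal_form_of[of "[inv x]"] inv_x(1) x(2) by simp
  ultimately have "normal_form_of ys = normal_form_of [inv x]"
    by (rule normal_form_eq[OF inv_closed[OF x(2)] inv_x(2)])
  then have "(if y \<in> A then y else \<one>) = (if inv x \<in> A then inv x else \<one>)"
    using fst_hd_normal_form_of[of y ys'] fst_hd_normal_form_of[of "inv x" "[]"] ys_eq by simp
  moreover have "y \<in> A \<longleftrightarrow> inv x \<notin> A" using y x inv_in_A_iff same_factor_iff by blast
  ultimately show False using inv_x(2) y(1) unfolding letters_def by (auto split: if_splits)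
qed

lemma the_normal_form_word_prod:
  assumes "reduced xs" and "xs \<noteq> []"
  shows "(THE ps. is_normal_form G A B ps (word_prod xs)) = normal_form_of xs"
  using normal_form_unique[OF reduced_word_prod_closed[OF assms(1)] word_prod_neq_one[OF assms]]
    is_normal_form_normal_form_of[OF assms] by (rule the1_equality)

lemma reduced_inverse_word:
  assumes "reduced xs"
  shows "reduced (rev (map (m_inv G) xs)) \<and> word_prod (rev (map (m_inv G) xs)) = inv (word_prod xs)"
  using assms
proof (induction xs)
  case (Cons x xs)
  have x: "x \<in> letters" "x \<in> carrier G" and xs: "reduced xs"
    and alt: "xs = [] \<or> \<not> same_factor x (hd xs)"
    using Cons.prems letters_carrier by (auto simp: reduced_Cons)
  note IH = Cons.IH[OF xs]
  have "xs = [] \<or> \<not> same_factor (inv (hd xs)) (inv x)"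
  proof (cases xs)
    case (Cons y ys)
    then have "y \<in> carrier G" using reduced_carrier[OF xs] by auto
    then show ?thesis using alt x Cons inv_in_A_iff inv_in_B_iff unfolding same_factor_def by auto
  qed simp
  then have "reduced (rev (map (m_inv G) (x # xs)))"
    using IH inv_letter[OF x(1)] by (auto simp: reduced_append last_rev hd_map)
  moreover have "word_prod (rev (map (m_inv G) (x # xs))) = inv (word_prod xs) \<otimes> inv x"
    using IH word_prod_append[of "rev (map (m_inv G) xs)" "[inv x]"] x(2) reduced_carrier[OF xs]
    by auto
  moreover have "\<dots> = inv (word_prod (x # xs))"
    using x(2) reduced_word_prod_closed[OF xs] by (simp add: inv_mult_group)
  ultimately show ?case by simp
qed simp

lemma reduced_merge:
  assumes "reduced (gs @ [y])" and "reduced (x # hs)" and "same_factor y x" and "y \<otimes> x \<noteq> \<one>"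
  shows "reduced (gs @ [y \<otimes> x] @ hs)"
proof -
  have y: "y \<in> letters" and x: "x \<in> letters" and gs: "reduced gs" and hs: "reduced hs"
    and gs_y: "gs = [] \<or> \<not> same_factor (last gs) y" and x_hs: "hs = [] \<or> \<not> same_factor x (hd hs)"
    using assms(1,2) by (auto simp: reduced_append reduced_Cons)
  note z = merge_letters[OF y x assms(3,4)]
  have "gs = [] \<or> \<not> same_factor (last gs) (y \<otimes> x)"
  proof (cases "gs = []")
    case False
    then have "last gs \<in> letters" using gs last_in_set unfolding reduced_def by blast
    then show ?thesis using gs_y z y by (simp add: same_factor_iff)
  qed simp
  moreover have "hs = [] \<or> \<not> same_factor (y \<otimes> x) (hd hs)"
  proof (cases "hs = []")
    case False
    then have "hd hs \<in> letters" using hs hd_in_set unfolding reduced_def by blast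
    then show ?thesis using x_hs z x by (simp add: same_factor_iff)
  qed simp
  ultimately show ?thesis using gs hs z(1) by (auto simp: reduced_append reduced_Cons)
qed

end

locale free_product_module = free_product G A B + group_module G act
  for G :: "('g,'m) monoid_scheme" (structure) and A B :: "'g set" and act :: "'g \<Rightarrow> 'e::banach \<Rightarrow> 'e"
begin

lemma split_aux_linear:
  assumes "pre \<in> carrier G" and "\<forall>p\<in>set ps. fst p \<in> A \<and> snd p \<in> B"
  shows "split_aux G act (\<lambda>x. c *\<^sub>R fA x + fA' x) (\<lambda>x. c *\<^sub>R fB x + fB' x) pre ps
     = c *\<^sub>R split_aux G act fA fB pre ps + split_aux G act fA' fB' pre ps"
  using assms
proof (induction ps arbitrary: pre)
  case (Cons p ps)
  obtain a b where p: "p = (a, b)" by force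
  have "a \<in> carrier G" and "b \<in> carrier G" using Cons.prems p by auto
  then show ?case using Cons p by (simp add: act_add act_scaleR algebra_simps)
qed simp

lemma split_map_linear:
  assumes "g \<in> carrier G"
  shows "split_map G A B act (\<lambda>x. c *\<^sub>R fA x + fA' x) (\<lambda>x. c *\<^sub>R fB x + fB' x) g
    = c *\<^sub>R split_map G A B act fA fB g + split_map G A B act fA' fB' g"
proof (cases "g = \<one>")
  case False
  have "is_normal_form G A B (THE ps. is_normal_form G A B ps g) g"
    using normal_form_unique[OF assms False] by (rule theI')
  then show ?thesis
    using False split_aux_linear normal_form_letters by (simp add: split_map_def)
qed (simp add: split_map_def)

end

locale split_map_setting = free_product_module G A B act
  for G :: "('g,'m) monoid_scheme" (structure) and A B and act :: "'g \<Rightarrow> 'e::banach \<Rightarrow> 'e" +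
  fixes fA fB :: "'g \<Rightarrow> 'e"
  assumes alternating_A: "alternating G A act fA" and alternating_B: "alternating G B act fB"
begin

lemma fA_one [simp]: "fA \<one> = 0"
  by (rule alternating_one_eq_zero[OF alternating_A A.one_closed])

lemma fB_one [simp]: "fB \<one> = 0"
  by (rule alternating_one_eq_zero[OF alternating_B B.one_closed])

definition f_letter :: "'g \<Rightarrow> 'e" where
  "f_letter x = (if x \<in> A then fA x else fB x)"

lemma f_letter_A: "a \<in> A \<Longrightarrow> f_letter a = fA a"
  by (simp add: f_letter_def)

lemma f_letter_B:
  assumes "b \<in> B"
  shows "f_letter b = fB b"
proof (cases "b \<in> A")
  case True
  then have "b = \<one>" using A_Int_B assms by blast
  then show ?thesis by (simp add: f_letter_def)
qed (simp add: f_letter_def)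

lemma f_letter_alternating:
  assumes "x \<in> A \<union> B"
  shows "f_letter x + act x (f_letter (inv x)) = 0"
proof (cases "x \<in> A")
  case True
  then show ?thesis using alternating_A inv_in_A_iff by (simp add: f_letter_A alternating_def)
next
  case False
  then have "x \<in> B" using assms by blast
  then show ?thesis using alternating_B inv_in_B_iff by (simp add: f_letter_B alternating_def)
qed

fun split_word :: "'g list \<Rightarrow> 'e" where
  "split_word [] = 0"
| "split_word (x # xs) = f_letter x + act x (split_word xs)"

lemma split_word_append:
  assumes "set xs \<subseteq> carrier G"
  shows "split_word (xs @ ys) = split_word xs + act (word_prod xs) (split_word ys)"
  using assms by (induction xs) (auto simp: act_add act_mult word_prod_closed)

lemma split_aux_pair_up:
  assumes "reduced xs" and "xs = [] \<or> hd xs \<in> A" and "pre \<in> carrier G"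
  shows "split_aux G act fA fB pre (pair_up xs) = act pre (split_word xs)"
  using assms
proof (induction xs arbitrary: pre rule: pair_up.induct)
  case (2 a)
  then show ?case by (simp add: f_letter_A act_zero)
next
  case (3 a b xs)
  have a: "a \<in> A" "a \<in> carrier G" and b: "b \<notin> A" "b \<in> B" "b \<in> carrier G" and xs: "reduced xs"
    using "3.prems"(1,2) letter_in_B_iff letters_carrier by (auto simp: reduced_Cons same_factor_iff)
  have "xs = [] \<or> hd xs \<in> A" using "3.prems"(1) reduced_Cons_hd_A[of b xs] b by (simp add: reduced_Cons)
  then show ?case
    using "3.IH"[OF xs] "3.prems"(3) a b by (simp add: f_letter_A f_letter_B act_add act_mult add.assoc)
qed (simp add: act_zero)

abbreviation F :: "'g \<Rightarrow> 'e" where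
  "F \<equiv> split_map G A B act fA fB"

lemma split_map_one [simp]: "F \<one> = 0"
  by (simp add: split_map_def)

lemma split_map_reduced:
  assumes "reduced xs"
  shows "F (word_prod xs) = split_word xs"
proof (cases xs)
  case (Cons x xs')
  then have "xs \<noteq> []" by simp
  have F_eq: "F (word_prod xs) = split_aux G act fA fB \<one> (normal_form_of xs)"
    unfolding split_map_def
    by (simp only: if_not_P[OF word_prod_neq_one[OF assms \<open>xs \<noteq> []\<close>]]
        the_normal_form_word_prod[OF assms \<open>xs \<noteq> []\<close>])
  show ?thesis
  proof (cases "x \<in> A")
    case True
    then show ?thesis using F_eq Cons assms split_aux_pair_up by (simp add: normal_form_of_def)
  next
    case False
    then have "x \<in> B" "x \<in> carrier G" and xs': "reduced xs'" "xs' = [] \<or> hd xs' \<in> A"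
      using assms Cons letter_in_B_iff letters_carrier reduced_Cons_hd_A by (auto simp: reduced_Cons)
    then show ?thesis
      using F_eq Cons False split_aux_pair_up[OF xs'] by (simp add: normal_form_of_def f_letter_B)
  qed
qed simp

lemma split_map_letter:
  assumes "x \<in> A \<union> B"
  shows "F x = f_letter x"
proof (cases "x = \<one>")
  case True
  then show ?thesis by (simp add: f_letter_A)
next
  case False
  then have "reduced [x]" using assms by (simp add: letters_def)
  then show ?thesis using split_map_reduced[of "[x]"] letters_carrier by (simp add: act_zero)
qed

lemma split_map_A: "a \<in> A \<Longrightarrow> F a = fA a"
  using split_map_letter f_letter_A by simp

lemma split_map_B: "b \<in> B \<Longrightarrow> F b = fB b"
  using split_map_letter f_letter_B by simp

lemma split_map_append:
  assumes "reduced (xs @ ys)"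
  shows "F (word_prod xs \<otimes> word_prod ys) = F (word_prod xs) + act (word_prod xs) (F (word_prod ys))"
proof -
  have "reduced xs" and "reduced ys" using assms by (simp_all add: reduced_append)
  then show ?thesis
    using split_map_reduced[OF assms] split_word_append[OF reduced_carrier]
      word_prod_append[OF reduced_carrier reduced_carrier] split_map_reduced by metis
qed

lemma cocycle_defect_Cons:
  assumes "reduced (x # hs)"
  shows "cocycle_defect F x (word_prod hs) = 0"
  using split_map_append[of "[x]" hs] assms letters_carrier by (simp add: reduced_Cons cocycle_defect_def)

lemma cocycle_defect_letter_cases:
  assumes "reduced gs" and x: "x \<in> letters"
  obtains "cocycle_defect F (word_prod gs) x = 0"
    | gs' y where "gs = gs' @ [y]" and "same_factor y x" and "y \<otimes> x \<noteq> \<one>"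
proof (cases gs rule: rev_exhaust)
  case Nil
  then show ?thesis using that(1) letters_carrier[OF x] by (simp add: cocycle_defect_def)
next
  case (snoc gs' y)
  have y: "y \<in> letters" "y \<in> carrier G" and gs': "reduced gs'"
    using assms(1) snoc letters_carrier by (auto simp: reduced_append)
  have g: "word_prod gs = word_prod gs' \<otimes> y"
    using snoc word_prod_append[OF reduced_carrier[OF gs']] y by simp
  have F_g: "F (word_prod gs) = F (word_prod gs') + act (word_prod gs') (f_letter y)"
    using split_map_append[of gs' "[y]"] assms(1) snoc g y split_map_letter letters_def by simp
  consider "same_factor y x \<and> y \<otimes> x \<noteq> \<one>" | "\<not> same_factor y x" | "y \<otimes> x = \<one>" by blast
  then show ?thesis
  proof cases
    case 1
    then show ?thesis using that(2) snoc by blast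
  next
    case 2
    then have "reduced (gs @ [x])" using assms snoc x by (simp add: reduced_append reduced_Cons)
    then show ?thesis
      using that(1) split_map_append[of gs "[x]"] x letters_carrier split_map_letter letters_def
      by (simp add: cocycle_defect_def)
  next
    case 3
    then have "x = inv y" using y(2) letters_carrier[OF x] by (metis inv_comm inv_equality)
    then have "f_letter y + act y (f_letter x) = 0"
      using f_letter_alternating y(1) letters_def by simp
    then have cancel: "act (word_prod gs') (f_letter y) + act (word_prod gs' \<otimes> y) (f_letter x) = 0"
      using reduced_word_prod_closed[OF gs'] y x letters_carrier
      by (simp add: act_mult act_add[symmetric] act_zero)
    have "word_prod gs \<otimes> x = word_prod gs'"
      using g 3 y(2) letters_carrier[OF x] reduced_word_prod_closed[OF gs'] by (simp add: m_assoc)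
    then have "cocycle_defect F (word_prod gs) x
        = - (act (word_prod gs') (f_letter y) + act (word_prod gs' \<otimes> y) (f_letter x))"
      using F_g g split_map_letter[of x] x letters_def by (simp add: cocycle_defect_def)
    then show ?thesis using that(1) cancel by simp
  qed
qed

lemma cocycle_defect_merge:
  assumes gs_y: "reduced (gs @ [y])" and x_hs: "reduced (x # hs)"
    and "same_factor y x" and "y \<otimes> x \<noteq> \<one>"
  shows "cocycle_defect F (word_prod gs \<otimes> y \<otimes> x) (word_prod hs) = 0"
    and "cocycle_defect F (word_prod gs \<otimes> y) x = act (word_prod gs) (cocycle_defect f_letter y x)"
proof -
  have word: "reduced (gs @ [y \<otimes> x] @ hs)" by (rule reduced_merge[OF assms])
  have gs: "reduced gs" and hs: "reduced hs" and y: "y \<in> letters" and x: "x \<in> letters"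
    using gs_y x_hs by (auto simp: reduced_append reduced_Cons)
  have z: "y \<otimes> x \<in> letters" using merge_letters[OF y x assms(3,4)] by blast
  have carrier: "word_prod gs \<in> carrier G" "y \<in> carrier G" "x \<in> carrier G" "word_prod hs \<in> carrier G"
    using gs hs x y letters_carrier reduced_word_prod_closed by auto
  have gs_z: "word_prod (gs @ [y \<otimes> x]) = word_prod gs \<otimes> y \<otimes> x"
    using word_prod_append[of gs "[y \<otimes> x]"] reduced_carrier[OF gs] carrier by (simp add: m_assoc)
  show "cocycle_defect F (word_prod gs \<otimes> y \<otimes> x) (word_prod hs) = 0"
    using split_map_append[of "gs @ [y \<otimes> x]" hs] word gs_z by (simp add: cocycle_defect_def)
  have "reduced (gs @ [y \<otimes> x])" using word z by (simp add: reduced_append)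
  then have "F (word_prod gs \<otimes> y \<otimes> x) = F (word_prod gs) + act (word_prod gs) (f_letter (y \<otimes> x))"
    using split_map_append[of gs "[y \<otimes> x]"] split_map_letter z carrier letters_def by (simp add: m_assoc)
  moreover have "F (word_prod gs \<otimes> y) = F (word_prod gs) + act (word_prod gs) (f_letter y)"
    using split_map_append[of gs "[y]"] gs_y split_map_letter y carrier letters_def by simp
  ultimately show "cocycle_defect F (word_prod gs \<otimes> y) x = act (word_prod gs) (cocycle_defect f_letter y x)"
    using split_map_letter x carrier letters_def by (simp add: cocycle_defect_def act_diff act_mult)
qed

lemma cocycle_defect_f_letter_le:
  assumes bound_A: "\<And>s t. s \<in> A \<Longrightarrow> t \<in> A \<Longrightarrow> norm (cocycle_defect fA s t) \<le> M"
    and bound_B: "\<And>s t. s \<in> B \<Longrightarrow> t \<in> B \<Longrightarrow> norm (cocycle_defect fB s t) \<le> M"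
    and "same_factor y x"
  shows "norm (cocycle_defect f_letter y x) \<le> M"
  using \<open>same_factor y x\<close> unfolding same_factor_def
proof (elim disjE conjE)
  assume "y \<in> A" "x \<in> A"
  then show ?thesis using bound_A by (simp add: cocycle_defect_def f_letter_A)
next
  assume "y \<in> B" "x \<in> B"
  then show ?thesis using bound_B by (simp add: cocycle_defect_def f_letter_B)
qed

lemma norm_cocycle_defect_word_le:
  assumes bound_A: "\<And>s t. s \<in> A \<Longrightarrow> t \<in> A \<Longrightarrow> norm (cocycle_defect fA s t) \<le> M"
    and bound_B: "\<And>s t. s \<in> B \<Longrightarrow> t \<in> B \<Longrightarrow> norm (cocycle_defect fB s t) \<le> M"
    and "reduced hs" and "g \<in> carrier G"
  shows "norm (cocycle_defect F g (word_prod hs)) \<le> M"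
  using assms(3,4)
proof (induction hs arbitrary: g)
  case Nil
  have "0 \<le> M" using bound_A[OF A.one_closed A.one_closed] norm_ge_zero order_trans by blast
  then show ?case using Nil by (simp add: cocycle_defect_def act_zero)
next
  case (Cons x hs)
  have x: "x \<in> letters" "x \<in> carrier G" and hs: "reduced hs"
    using Cons.prems letters_carrier by (auto simp: reduced_Cons)
  have split: "cocycle_defect F g (word_prod (x # hs))
      = cocycle_defect F (g \<otimes> x) (word_prod hs) + cocycle_defect F g x"
    using cocycle_defect_mult_right[OF Cons.prems(2) x(2) reduced_word_prod_closed[OF hs]]
      cocycle_defect_Cons[OF Cons.prems(1)] Cons.prems(2) by (simp add: act_zero)
  obtain gs where gs: "reduced gs" "word_prod gs = g" using reduced_word_exists Cons.prems(2) by blast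
  from gs(1) x(1) show ?case
  proof (cases rule: cocycle_defect_letter_cases)
    case 1
    then show ?thesis using split gs(2) Cons.IH[OF hs] Cons.prems(2) x(2) by simp
  next
    case (2 gs' y)
    have gs'_y: "reduced (gs' @ [y])" and g_eq: "g = word_prod gs' \<otimes> y"
      using gs 2(1) word_prod_append[of gs' "[y]"] reduced_carrier[OF gs(1)] by auto
    note merge = cocycle_defect_merge[OF gs'_y Cons.prems(1) 2(2,3)]
    have "norm (cocycle_defect F g (word_prod (x # hs))) = norm (cocycle_defect f_letter y x)"
      using split merge g_eq gs'_y reduced_word_prod_closed reduced_append act_norm by simp
    also have "\<dots> \<le> M" by (rule cocycle_defect_f_letter_le[OF bound_A bound_B 2(2)])
    finally show ?thesis .
  qed
qed

lemma norm_cocycle_defect_le: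
  assumes "\<And>s t. s \<in> A \<Longrightarrow> t \<in> A \<Longrightarrow> norm (cocycle_defect fA s t) \<le> M"
    and "\<And>s t. s \<in> B \<Longrightarrow> t \<in> B \<Longrightarrow> norm (cocycle_defect fB s t) \<le> M"
    and "g \<in> carrier G" and "h \<in> carrier G"
  shows "norm (cocycle_defect F g h) \<le> M"
  using reduced_word_exists[OF assms(4)] norm_cocycle_defect_word_le[OF assms(1,2) _ assms(3)] by blast

lemma split_map_alternating:
  assumes "g \<in> carrier G"
  shows "F g + act g (F (inv g)) = 0"
proof -
  have "F (word_prod gs) + act (word_prod gs) (F (inv (word_prod gs))) = 0" if "reduced gs" for gs
    using that
  proof (induction gs)
    case (Cons x xs)
    have x: "x \<in> letters" "x \<in> carrier G" and xs: "reduced xs"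
      using Cons.prems letters_carrier by (auto simp: reduced_Cons)
    let ?g = "word_prod xs"
    have g: "?g \<in> carrier G" using reduced_word_prod_closed[OF xs] .
    have "reduced (rev (map (m_inv G) xs) @ [inv x])"
      using reduced_inverse_word[OF Cons.prems] by simp
    then have F_inv: "F (inv (word_prod (x # xs))) = F (inv ?g) + act (inv ?g) (f_letter (inv x))"
      using split_map_append[of "rev (map (m_inv G) xs)" "[inv x]"] reduced_inverse_word[OF xs]
        split_map_letter[of "inv x"] inv_letter[OF x(1)] x(2) g letters_def
      by (simp add: inv_mult_group)
    have F_g: "F (word_prod (x # xs)) = f_letter x + act x (F ?g)"
      using split_map_append[of "[x]" xs] Cons.prems split_map_letter[of x] x letters_def by simp
    have "F (word_prod (x # xs)) + act (word_prod (x # xs)) (F (inv (word_prod (x # xs))))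
        = (f_letter x + act x (f_letter (inv x))) + act x (F ?g + act ?g (F (inv ?g)))"
      using F_inv F_g x g by (simp add: act_add act_mult act_inv_cancel algebra_simps)
    also have "\<dots> = 0"
      using f_letter_alternating[of x] x Cons.IH[OF xs] letters_def by (simp add: act_zero)
    finally show ?case .
  qed simp
  then show ?thesis using reduced_word_exists[OF assms] by blast
qed

lemma cocycle_eq_split_map:
  assumes f: "cocycle G (carrier G) act f"
    and f_A: "\<And>a. a \<in> A \<Longrightarrow> f a = fA a" and f_B: "\<And>b. b \<in> B \<Longrightarrow> f b = fB b"
    and g: "g \<in> carrier G"
  shows "f g = F g"
proof -
  have "f (word_prod xs) = split_word xs" if "set xs \<subseteq> letters" for xs
    using that
  proof (induction xs)
    case Nil
    then show ?case using cocycle_one_eq_zero[OF f] by simp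
  next
    case (Cons x xs)
    then have "x \<in> carrier G" "word_prod xs \<in> carrier G"
      using letters_carrier word_prod_closed by auto
    moreover have "f x = f_letter x"
      using Cons.prems f_A f_B letters_def by (auto simp: f_letter_A f_letter_B)
    ultimately show ?case using f Cons by (simp add: cocycle_def)
  qed
  then show ?thesis
    using reduced_word_exists[OF g] split_map_reduced reduced_def by metis
qed

lemma quasicocycle_split_map:
  assumes qA: "quasicocycle G A act fA" and qB: "quasicocycle G B act fB"
  shows "quasicocycle G (carrier G) act F"
    and "defect G (carrier G) act F = max (defect G A act fA) (defect G B act fB)"
proof -
  let ?M = "max (defect G A act fA) (defect G B act fB)"
  have "norm (cocycle_defect fA s t) \<le> ?M" if "s \<in> A" and "t \<in> A" for s t
    using defect_upper[OF qA that] by (simp add: cocycle_defect_def le_max_iff_disj)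
  moreover have "norm (cocycle_defect fB s t) \<le> ?M" if "s \<in> B" and "t \<in> B" for s t
    using defect_upper[OF qB that] by (simp add: cocycle_defect_def le_max_iff_disj)
  ultimately have bound: "norm (F (g \<otimes> h) - F g - act g (F h)) \<le> ?M"
    if "g \<in> carrier G" and "h \<in> carrier G" for g h
    using norm_cocycle_defect_le that by (simp add: cocycle_defect_def)
  have "carrier G \<noteq> {}" using one_closed by blast
  have qF: "quasicocycle G (carrier G) act F"
    using \<open>carrier G \<noteq> {}\<close> by (rule quasicocycle_defect_le(1)) (rule bound)
  have upper: "defect G (carrier G) act F \<le> ?M"
    using \<open>carrier G \<noteq> {}\<close> by (rule quasicocycle_defect_le(2)) (rule bound)
  have restrict: "defect G H act f \<le> defect G (carrier G) act F"
    if H: "subgroup H G" and F_H: "\<And>s. s \<in> H \<Longrightarrow> F s = f s" for H f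
  proof (rule quasicocycle_defect_le(2))
    show "H \<noteq> {}" using subgroup.one_closed[OF H] by blast
    fix s t assume st: "s \<in> H" "t \<in> H"
    then have "s \<in> carrier G" "t \<in> carrier G" "s \<otimes> t \<in> H"
      using subgroup.mem_carrier[OF H] subgroup.m_closed[OF H] by auto
    then show "norm (f (s \<otimes> t) - f s - act s (f t)) \<le> defect G (carrier G) act F"
      using defect_upper[OF qF, of s t] F_H st by simp
  qed
  have "?M \<le> defect G (carrier G) act F"
    using restrict[OF subgroup_A split_map_A] restrict[OF subgroup_B split_map_B] by simp
  with qF upper show "quasicocycle G (carrier G) act F" and "defect G (carrier G) act F = ?M"
    by simp_all
qed

lemma cocycle_split_map:
  assumes "cocycle G A act fA" and "cocycle G B act fB"
  shows "cocycle G (carrier G) act F"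
proof -
  have "norm (cocycle_defect F g h) \<le> 0" if "g \<in> carrier G" and "h \<in> carrier G" for g h
    using assms by (intro norm_cocycle_defect_le that) (simp_all add: cocycle_def cocycle_defect_def)
  then have "F (g \<otimes> h) - (F g + act g (F h)) = 0" if "g \<in> carrier G" and "h \<in> carrier G" for g h
    using that by (simp add: cocycle_defect_def diff_diff_add)
  then show ?thesis unfolding cocycle_def by simp
qed

end

context free_product_module
begin

lemma split_map_settingI:
  "alternating G A act fA \<Longrightarrow> alternating G B act fB \<Longrightarrow> split_map_setting G A B act fA fB"
  by (intro split_map_setting.intro split_map_setting_axioms.intro free_product_module_axioms)

lemma alt_quasicocycle_split_map:
  assumes "alt_quasicocycle G A act fA" and "alt_quasicocycle G B act fB"
  shows "alt_quasicocycle G (carrier G) act (split_map G A B act fA fB)"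
    and "defect G (carrier G) act (split_map G A B act fA fB) = max (defect G A act fA) (defect G B act fB)"
proof -
  interpret split_map_setting G A B act fA fB
    using assms by (intro split_map_settingI) (simp_all add: alt_quasicocycle_def)
  have "quasicocycle G A act fA" and "quasicocycle G B act fB"
    using assms by (simp_all add: alt_quasicocycle_def)
  then show "alt_quasicocycle G (carrier G) act F"
    and "defect G (carrier G) act F = max (defect G A act fA) (defect G B act fB)"
    using quasicocycle_split_map split_map_alternating by (simp_all add: alt_quasicocycle_def alternating_def)
qed

lemma cocycle_split_map_unique:
  assumes "cocycle G A act fA" and "cocycle G B act fB"
  shows "cocycle G (carrier G) act (split_map G A B act fA fB) \<and>
    (\<forall>a\<in>A. split_map G A B act fA fB a = fA a) \<and> (\<forall>b\<in>B. split_map G A B act fA fB b = fB b) \<and>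
    (\<forall>f. cocycle G (carrier G) act f \<and> (\<forall>a\<in>A. f a = fA a) \<and> (\<forall>b\<in>B. f b = fB b) \<longrightarrow>
      (\<forall>g\<in>carrier G. f g = split_map G A B act fA fB g))"
proof -
  interpret split_map_setting G A B act fA fB
    using assms cocycle_imp_alternating subgroup_A subgroup_B by (intro split_map_settingI) simp_all
  have "\<forall>g\<in>carrier G. f g = F g"
    if "cocycle G (carrier G) act f \<and> (\<forall>a\<in>A. f a = fA a) \<and> (\<forall>b\<in>B. f b = fB b)" for f
    using that by (intro ballI cocycle_eq_split_map) auto
  then show ?thesis using cocycle_split_map[OF assms] split_map_A split_map_B by simp
qed

end

theorem proposition2p1:
  fixes G :: "('g,'m) monoid_scheme" and A B :: "'g set"
    and act :: "'g \<Rightarrow> 'e::banach \<Rightarrow> 'e"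
  assumes free: "is_free_product G A B"
    and A_nontriv: "A \<noteq> {\<one>\<^bsub>G\<^esub>}" and B_nontriv: "B \<noteq> {\<one>\<^bsub>G\<^esub>}"
    and module: "banach_module G act"
  shows
    "(\<forall>fA fB. alt_quasicocycle G A act fA \<and> alt_quasicocycle G B act fB \<longrightarrow>
        alt_quasicocycle G (carrier G) act (split_map G A B act fA fB) \<and>
        defect G (carrier G) act (split_map G A B act fA fB)
          = max (defect G A act fA) (defect G B act fB))
   \<and> (\<forall>fA fB fA' fB' (c::real).
        alt_quasicocycle G A act fA \<and> alt_quasicocycle G B act fB \<and>
        alt_quasicocycle G A act fA' \<and> alt_quasicocycle G B act fB' \<longrightarrow>
        (\<forall>g\<in>carrier G. split_map G A B act (\<lambda>x. c *\<^sub>R fA x + fA' x) (\<lambda>x. c *\<^sub>R fB x + fB' x) g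
            = c *\<^sub>R split_map G A B act fA fB g + split_map G A B act fA' fB' g))
   \<and> (\<forall>fA fB. cocycle G A act fA \<and> cocycle G B act fB \<longrightarrow>
        cocycle G (carrier G) act (split_map G A B act fA fB) \<and>
        (\<forall>a\<in>A. split_map G A B act fA fB a = fA a) \<and>
        (\<forall>b\<in>B. split_map G A B act fA fB b = fB b) \<and>
        (\<forall>f. cocycle G (carrier G) act f \<and> (\<forall>a\<in>A. f a = fA a) \<and> (\<forall>b\<in>B. f b = fB b) \<longrightarrow>
             (\<forall>g\<in>carrier G. f g = split_map G A B act fA fB g)))"
proof -
  have "group G" using free unfolding is_free_product_def by blast
  then interpret free_product_module G A B act
    using free module by (simp add: free_product_module_def free_product_def free_product_axioms_def
        group_module_def group_module_axioms_def)
  show ?thesis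
    by (intro conjI allI impI)
      (simp_all add: alt_quasicocycle_split_map split_map_linear cocycle_split_map_unique)
qed

end
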